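(* Let $n\ge 3$ and $m\ge 3$ with $n\equiv 1$ or $2 \pmod 4$ and $m\equiv 0\pmod 4$. Let $H$ be the graph obtained by identifying one vertex of the cycle $C_n$ with an endpoint of the path $P_m$ (a $1$-clique sum of $C_n$ and $P_m$). Then $v(H)=v(C_n)+v(P_{m-2})-1$.
   Context: For a proper graded ideal $I$ of a standard graded polynomial ring $S$ over a field, the $v$-number is $v(I)=\min\{k\ge 0 : \exists f\in S_k,\ \mathcal P\in\operatorname{Ass}(S/I) \text{ with } (I:f)=\mathcal P\}$. For a finite simple graph $G$, $I(G)$ is the edge ideal generated by $x_ix_j$ over edges $\{x_i,x_j\}$, and $v(G):=v(I(G))$. $P_k$ is the path on $k$ vertices and $C_n$ the cycle on $n$ vertices. A $1$-clique sum of $G_1,G_2$ is $G_1\cup G_2$ where $G_1\cap G_2$ is a single vertex and neither $G_i$ is a single vertex. *)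

theory Defs
  imports Main "HOL-Library.Poly_Mapping"
begin

text \<open>Polynomials over a field 'k in variables indexed by nat:
  a polynomial is a finitely supported map from monomials monomials to 'k.\<close>

type_synonym 'k mpoly = "(nat \<Rightarrow>\<^sub>0 nat) \<Rightarrow>\<^sub>0 'k"

text \<open>The standard graded polynomial ring S = k[x_i : i in V] as a subset of 'k mpoly.\<close>
definition poly_ring :: "nat set \<Rightarrow> ('k::field) mpoly set" where
  "poly_ring V = {p. \<forall>mon \<in> Poly_Mapping.keys p. Poly_Mapping.keys mon \<subseteq> V}"

definition var :: "nat \<Rightarrow> ('k::field) mpoly" where
  "var i = Poly_Mapping.single (Poly_Mapping.single i 1) 1"

definition mon_deg :: "(nat \<Rightarrow>\<^sub>0 nat) \<Rightarrow> nat" where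
  "mon_deg mon = (\<Sum>i\<in>Poly_Mapping.keys mon. Poly_Mapping.lookup mon i)"

definition homog :: "nat set \<Rightarrow> nat \<Rightarrow> ('k::field) mpoly set" where
  "homog V k = {p \<in> poly_ring V. \<forall>mon \<in> Poly_Mapping.keys p. mon_deg mon = k}"

definition is_ideal :: "nat set \<Rightarrow> ('k::field) mpoly set \<Rightarrow> bool" where
  "is_ideal V I \<longleftrightarrow> I \<subseteq> poly_ring V \<and> 0 \<in> I \<and>
     (\<forall>a\<in>I. \<forall>b\<in>I. a + b \<in> I) \<and> (\<forall>a\<in>I. \<forall>r\<in>poly_ring V. r * a \<in> I)"

definition is_prime_ideal :: "nat set \<Rightarrow> ('k::field) mpoly set \<Rightarrow> bool" where
  "is_prime_ideal V P \<longleftrightarrow> is_ideal V P \<and> P \<noteq> poly_ring V \<and>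
     (\<forall>a\<in>poly_ring V. \<forall>b\<in>poly_ring V. a * b \<in> P \<longrightarrow> a \<in> P \<or> b \<in> P)"

definition colon :: "nat set \<Rightarrow> ('k::field) mpoly set \<Rightarrow> 'k mpoly \<Rightarrow> 'k mpoly set" where
  "colon V I f = {g \<in> poly_ring V. g * f \<in> I}"

definition Ass :: "nat set \<Rightarrow> ('k::field) mpoly set \<Rightarrow> 'k mpoly set set" where
  "Ass V I = {P. is_prime_ideal V P \<and> (\<exists>f\<in>poly_ring V. colon V I f = P)}"

definition v_number :: "nat set \<Rightarrow> ('k::field) mpoly set \<Rightarrow> nat" where
  "v_number V I = (LEAST k. \<exists>f\<in>homog V k. \<exists>P\<in>Ass V I. colon V I f = P)"

text \<open>Edge ideal of a graph with vertex set V and edge set E (edges are 2-element sets),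
  as an ideal of S = k[x_i : i in V]: generated by x_u x_v for {u,v} in E.\<close>
definition edge_poly :: "nat set \<Rightarrow> ('k::field) mpoly" where
  "edge_poly e = (\<Prod>u\<in>e. var u)"

definition edge_ideal :: "nat set \<Rightarrow> nat set set \<Rightarrow> ('k::field) mpoly set" where
  "edge_ideal V E = {(\<Sum>e\<in>F. c e * edge_poly e) | F c.
      finite F \<and> F \<subseteq> E \<and> (\<forall>e\<in>F. c e \<in> poly_ring V)}"

text \<open>v(G) for G = (V,E); depends on the coefficient field 'k (given via the type argument).\<close>
definition v_graph :: "('k::field) itself \<Rightarrow> nat set \<Rightarrow> nat set set \<Rightarrow> nat" where
  "v_graph _ V E = v_number V (edge_ideal V E :: 'k mpoly set)"

definition cycle_V :: "nat \<Rightarrow> nat set" where "cycle_V n = {0..<n}"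
definition cycle_E :: "nat \<Rightarrow> nat set set" where
  "cycle_E n = {{i, (i + 1) mod n} | i. i < n}"
definition path_V :: "nat \<Rightarrow> nat set" where "path_V m = {0..<m}"
definition path_E :: "nat \<Rightarrow> nat set set" where
  "path_E m = {{i, i + 1} | i. i + 1 < m}"

text \<open>H: C_n on 0..n-1 with a pendant path 0 - n - (n+1) - ... - (n+m-2) attached at vertex 0,
  i.e. P_m with one endpoint identified with vertex 0 of the cycle.\<close>
definition H_V :: "nat \<Rightarrow> nat \<Rightarrow> nat set" where "H_V n m = {0..<n + m - 1}"
definition H_E :: "nat \<Rightarrow> nat \<Rightarrow> nat set set" where
  "H_E n m = cycle_E n \<union> {{0, n}} \<union> {{n + j, n + j + 1} | j. j + 2 < m}"

end

theory Submission
  imports Defs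
begin

(* v(G) is the least size of an independent set A whose neighbourhood N(A) is a vertex cover:
   for such A the colon ideal (I(G) : x^A) is the prime ideal generated by the variables of
   N(A), and conversely, if (I(G) : f) is prime then the support of a monomial of f outside
   I(G) is such a set, of size at most deg f.

   If g is injective on S and every {x, g x} is an edge, a vertex cover C contains x or g x for
   each x in S, so |S| <= 2|C|.  In C_n, P_k and H every vertex has degree at most 2, except the
   vertex of H where the path is attached, which has degree 3; hence |N(A)| <= 2|A| (+1), and
   running along the cycle and the path gives v(C_n) >= n/4, v(P_k) >= (k-1)/4 and
   v(H) >= (n+m-4)/4.  Independent sets of vertices spaced four apart attain these bounds, so
   v(C_n) = floor(n/4) + 1, v(P_(m-2)) = m/4 and v(H) = floor(n/4) + m/4. *)

section \<open>Square-free monomials and edge ideals\<close>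

definition monom_of_set :: "nat set \<Rightarrow> (nat \<Rightarrow>\<^sub>0 nat)" where
  "monom_of_set A = (\<Sum>u\<in>A. Poly_Mapping.single u 1)"

lemma lookup_monom_of_set:
  "finite A \<Longrightarrow> Poly_Mapping.lookup (monom_of_set A) u = (if u \<in> A then 1 else 0)"
  unfolding monom_of_set_def by (simp add: lookup_sum lookup_single when_def)

lemma keys_monom_of_set: "finite A \<Longrightarrow> Poly_Mapping.keys (monom_of_set A) = A"
  by (auto simp: in_keys_iff lookup_monom_of_set split: if_splits)

lemma mon_deg_monom_of_set: "finite A \<Longrightarrow> mon_deg (monom_of_set A) = card A"
  by (simp add: mon_deg_def keys_monom_of_set lookup_monom_of_set)

lemma card_keys_le_mon_deg: "card (Poly_Mapping.keys \<mu>) \<le> mon_deg \<mu>"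
proof -
  have "card (Poly_Mapping.keys \<mu>) = (\<Sum>i\<in>Poly_Mapping.keys \<mu>. 1)" by simp
  also have "\<dots> \<le> mon_deg \<mu>"
    unfolding mon_deg_def by (rule sum_mono) (auto simp: in_keys_iff)
  finally show ?thesis .
qed

lemma keys_add_monom:
  "Poly_Mapping.keys ((\<mu> :: nat \<Rightarrow>\<^sub>0 nat) + \<nu>) = Poly_Mapping.keys \<mu> \<union> Poly_Mapping.keys \<nu>"
  by (auto simp: in_keys_iff lookup_add)

lemma edge_poly_eq_single:
  "finite e \<Longrightarrow> (edge_poly e :: 'k::field mpoly) = Poly_Mapping.single (monom_of_set e) 1"
  unfolding edge_poly_def
  by (induction e rule: finite_induct) (simp_all add: monom_of_set_def var_def mult_single)

lemma lookup_single_mult: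
  "Poly_Mapping.lookup (Poly_Mapping.single \<mu> c * (p :: 'k::field mpoly)) (\<mu> + \<nu>)
     = c * Poly_Mapping.lookup p \<nu>"
proof -
  have "Poly_Mapping.lookup (Poly_Mapping.single \<mu> c * p) (\<mu> + \<nu>)
     = (\<Sum>l. (c * (\<Sum>q. Poly_Mapping.lookup p q when \<mu> + \<nu> = l + q) when \<mu> = l))"
    by (simp add: lookup_mult lookup_single when_mult)
  then show ?thesis by simp
qed

lemma keys_single_mult:
  assumes "c \<noteq> 0"
  shows "Poly_Mapping.keys (Poly_Mapping.single \<mu> c * (p :: 'k::field mpoly))
           = (\<lambda>\<nu>. \<mu> + \<nu>) ` Poly_Mapping.keys p"
proof
  show "Poly_Mapping.keys (Poly_Mapping.single \<mu> c * p) \<subseteq> (\<lambda>\<nu>. \<mu> + \<nu>) ` Poly_Mapping.keys p"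
    using keys_mult[of "Poly_Mapping.single \<mu> c" p] assms by auto
  show "(\<lambda>\<nu>. \<mu> + \<nu>) ` Poly_Mapping.keys p \<subseteq> Poly_Mapping.keys (Poly_Mapping.single \<mu> c * p)"
    using assms by (auto simp: in_keys_iff lookup_single_mult)
qed

lemma poly_eq_sum_monomials:
  "(p :: 'k::field mpoly)
     = (\<Sum>\<mu>\<in>Poly_Mapping.keys p. Poly_Mapping.single \<mu> (Poly_Mapping.lookup p \<mu>))"
  by (rule poly_mapping_eqI) (auto simp: lookup_sum lookup_single when_def in_keys_iff)

lemma poly_ring_add: "a \<in> poly_ring V \<Longrightarrow> b \<in> poly_ring V \<Longrightarrow> a + b \<in> poly_ring V"
  unfolding poly_ring_def using keys_add[of a b] by blast

lemma poly_ring_mult: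
  "a \<in> poly_ring V \<Longrightarrow> b \<in> poly_ring V \<Longrightarrow> (a :: 'k::field mpoly) * b \<in> poly_ring V"
  unfolding poly_ring_def using keys_mult[of a b] by (fastforce simp: keys_add_monom)

lemma poly_ring_sum: "(\<And>i. i \<in> I \<Longrightarrow> f i \<in> poly_ring V) \<Longrightarrow> sum f I \<in> poly_ring V"
  unfolding poly_ring_def using keys_sum[of f I] by blast

lemma poly_ring_single: "Poly_Mapping.keys \<mu> \<subseteq> V \<Longrightarrow> Poly_Mapping.single \<mu> c \<in> poly_ring V"
  unfolding poly_ring_def by auto

lemma poly_ring_one: "1 \<in> poly_ring V"
  unfolding poly_ring_def by auto

lemma single_monom_of_set_in_poly_ring:
  "finite A \<Longrightarrow> A \<subseteq> V \<Longrightarrow> Poly_Mapping.single (monom_of_set A) c \<in> poly_ring V"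
  by (simp add: poly_ring_single keys_monom_of_set)

lemma var_in_poly_ring: "i \<in> V \<Longrightarrow> var i \<in> poly_ring V"
  unfolding var_def by (simp add: poly_ring_single)

lemma edge_poly_in_poly_ring: "finite e \<Longrightarrow> e \<subseteq> V \<Longrightarrow> edge_poly e \<in> poly_ring V"
  by (simp add: edge_poly_eq_single single_monom_of_set_in_poly_ring)

definition contains_edge :: "nat set set \<Rightarrow> (nat \<Rightarrow>\<^sub>0 nat) \<Rightarrow> bool" where
  "contains_edge E \<mu> \<longleftrightarrow> (\<exists>e\<in>E. e \<subseteq> Poly_Mapping.keys \<mu>)"

lemma mem_edge_idealD:
  assumes E: "\<forall>e\<in>E. finite e \<and> e \<subseteq> V" and p: "p \<in> edge_ideal V E"
  shows "p \<in> poly_ring V \<and> (\<forall>\<mu>\<in>Poly_Mapping.keys p. contains_edge E \<mu>)"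
proof -
  obtain F c where p: "p = (\<Sum>e\<in>F. c e * edge_poly e)" and F: "F \<subseteq> E"
    and c: "\<forall>e\<in>F. c e \<in> poly_ring V"
    using p unfolding edge_ideal_def by blast
  have summand: "c e * edge_poly e = Poly_Mapping.single (monom_of_set e) 1 * c e" if "e \<in> F" for e
    using E F that by (auto simp: edge_poly_eq_single mult.commute)
  have "p \<in> poly_ring V"
    unfolding p using E F c by (intro poly_ring_sum poly_ring_mult edge_poly_in_poly_ring) auto
  moreover have "contains_edge E \<mu>" if "\<mu> \<in> Poly_Mapping.keys p" for \<mu>
  proof -
    obtain e where e: "e \<in> F" "\<mu> \<in> Poly_Mapping.keys (c e * edge_poly e)"
      using \<open>\<mu> \<in> _\<close> keys_sum[of "\<lambda>e. c e * edge_poly e" F] unfolding p by blast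
    then obtain \<nu> where "\<mu> = monom_of_set e + \<nu>"
      using summand keys_single_mult[of 1 "monom_of_set e" "c e"] by auto
    moreover have "e \<in> E" "finite e" using e F E by auto
    ultimately show ?thesis
      unfolding contains_edge_def by (auto simp: keys_add_monom keys_monom_of_set)
  qed
  ultimately show ?thesis by blast
qed

lemma sum_mult_edge_poly_in_edge_ideal:
  assumes "finite K" and "\<And>\<mu>. \<mu> \<in> K \<Longrightarrow> ch \<mu> \<in> E \<and> d \<mu> \<in> poly_ring V"
  shows "(\<Sum>\<mu>\<in>K. d \<mu> * edge_poly (ch \<mu>)) \<in> edge_ideal V E"
proof -
  define c where "c e = (\<Sum>\<mu>\<in>{\<mu>\<in>K. ch \<mu> = e}. d \<mu>)" for e
  have "(\<Sum>\<mu>\<in>K. d \<mu> * edge_poly (ch \<mu>))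
      = (\<Sum>e\<in>ch ` K. \<Sum>\<mu>\<in>{\<mu>\<in>K. ch \<mu> = e}. d \<mu> * edge_poly (ch \<mu>))"
    using assms(1) by (intro sum.group[symmetric]) auto
  also have "\<dots> = (\<Sum>e\<in>ch ` K. c e * edge_poly e)"
    unfolding c_def sum_distrib_right by (intro sum.cong) auto
  finally have sum_eq: "(\<Sum>\<mu>\<in>K. d \<mu> * edge_poly (ch \<mu>)) = (\<Sum>e\<in>ch ` K. c e * edge_poly e)" .
  have "\<forall>e\<in>ch ` K. c e \<in> poly_ring V"
    unfolding c_def using assms(2) by (auto intro!: poly_ring_sum)
  then show ?thesis
    unfolding edge_ideal_def mem_Collect_eq sum_eq using assms by (intro exI[of _ "ch ` K"] exI[of _ c]) auto
qed

lemma mem_edge_ideal_iff: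
  assumes E: "\<forall>e\<in>E. finite e \<and> e \<subseteq> V"
  shows "(p :: 'k::field mpoly) \<in> edge_ideal V E
           \<longleftrightarrow> p \<in> poly_ring V \<and> (\<forall>\<mu>\<in>Poly_Mapping.keys p. contains_edge E \<mu>)"
proof
  assume "p \<in> edge_ideal V E"
  then show "p \<in> poly_ring V \<and> (\<forall>\<mu>\<in>Poly_Mapping.keys p. contains_edge E \<mu>)"
    by (rule mem_edge_idealD[OF E])
next
  assume p: "p \<in> poly_ring V \<and> (\<forall>\<mu>\<in>Poly_Mapping.keys p. contains_edge E \<mu>)"
  define ch where "ch \<mu> = (SOME e. e \<in> E \<and> e \<subseteq> Poly_Mapping.keys \<mu>)" for \<mu> :: "nat \<Rightarrow>\<^sub>0 nat"
  have ch: "ch \<mu> \<in> E \<and> ch \<mu> \<subseteq> Poly_Mapping.keys \<mu>" if "\<mu> \<in> Poly_Mapping.keys p" for \<mu>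
    using p that unfolding contains_edge_def ch_def by (metis (mono_tags, lifting) someI_ex)
  define d where "d \<mu> = Poly_Mapping.single (\<mu> - monom_of_set (ch \<mu>)) (Poly_Mapping.lookup p \<mu>)"
    for \<mu>
  have summand: "Poly_Mapping.single \<mu> (Poly_Mapping.lookup p \<mu>) = d \<mu> * edge_poly (ch \<mu>)"
    if "\<mu> \<in> Poly_Mapping.keys p" for \<mu>
  proof -
    have fin: "finite (ch \<mu>)" using E ch that by blast
    have "\<mu> - monom_of_set (ch \<mu>) + monom_of_set (ch \<mu>) = \<mu>"
      using ch[OF that] fin
      by (intro poly_mapping_eqI) (auto simp: lookup_add lookup_minus lookup_monom_of_set in_keys_iff)
    then show ?thesis unfolding d_def by (simp add: edge_poly_eq_single[OF fin] mult_single)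
  qed
  have d: "d \<mu> \<in> poly_ring V" if "\<mu> \<in> Poly_Mapping.keys p" for \<mu>
  proof -
    have "Poly_Mapping.keys (\<mu> - monom_of_set (ch \<mu>)) \<subseteq> Poly_Mapping.keys \<mu>"
      by (auto simp: in_keys_iff lookup_minus)
    then show ?thesis using p that unfolding d_def poly_ring_def by auto
  qed
  have "p = (\<Sum>\<mu>\<in>Poly_Mapping.keys p. Poly_Mapping.single \<mu> (Poly_Mapping.lookup p \<mu>))"
    by (rule poly_eq_sum_monomials)
  also have "\<dots> = (\<Sum>\<mu>\<in>Poly_Mapping.keys p. d \<mu> * edge_poly (ch \<mu>))"
    using summand by (rule sum.cong[OF refl])
  also have "\<dots> \<in> edge_ideal V E"
    using ch d by (intro sum_mult_edge_poly_in_edge_ideal) auto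
  finally show "p \<in> edge_ideal V E" .
qed

definition var_ideal :: "nat set \<Rightarrow> nat set \<Rightarrow> ('k::field) mpoly set" where
  "var_ideal V C = {p \<in> poly_ring V. \<forall>\<mu>\<in>Poly_Mapping.keys p. Poly_Mapping.keys \<mu> \<inter> C \<noteq> {}}"

definition restrict_monoms :: "((nat \<Rightarrow>\<^sub>0 nat) \<Rightarrow> bool) \<Rightarrow> ('k::field) mpoly \<Rightarrow> 'k mpoly" where
  "restrict_monoms P p = Abs_poly_mapping (\<lambda>\<mu>. Poly_Mapping.lookup p \<mu> when P \<mu>)"

lemma lookup_restrict_monoms:
  "Poly_Mapping.lookup (restrict_monoms P p) = (\<lambda>\<mu>. Poly_Mapping.lookup p \<mu> when P \<mu>)"
proof -
  have "finite {\<mu>. (Poly_Mapping.lookup p \<mu> when P \<mu>) \<noteq> 0}"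
    by (rule finite_subset[of _ "Poly_Mapping.keys p"]) (auto simp: in_keys_iff)
  then show ?thesis unfolding restrict_monoms_def by simp
qed

lemma keys_restrict_monoms:
  "Poly_Mapping.keys (restrict_monoms P p) = {\<mu> \<in> Poly_Mapping.keys p. P \<mu>}"
  by (auto simp: in_keys_iff lookup_restrict_monoms)

lemma restrict_monoms_split: "p = restrict_monoms P p + restrict_monoms (\<lambda>\<mu>. \<not> P \<mu>) p"
  by (rule poly_mapping_eqI) (simp add: lookup_add lookup_restrict_monoms when_def)

lemma is_ideal_var_ideal: "is_ideal V (var_ideal V C :: 'k::field mpoly set)"
  unfolding is_ideal_def
proof (intro conjI ballI)
  show "var_ideal V C \<subseteq> poly_ring V" "0 \<in> (var_ideal V C :: 'k mpoly set)"
    unfolding var_ideal_def poly_ring_def by auto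
next
  fix a b :: "'k mpoly" assume "a \<in> var_ideal V C" "b \<in> var_ideal V C"
  then show "a + b \<in> var_ideal V C"
    unfolding var_ideal_def using keys_add[of a b] by (auto intro: poly_ring_add)
next
  fix a r :: "'k mpoly" assume a: "a \<in> var_ideal V C" and r: "r \<in> poly_ring V"
  have "Poly_Mapping.keys \<mu> \<inter> C \<noteq> {}" if \<mu>: "\<mu> \<in> Poly_Mapping.keys (r * a)" for \<mu>
  proof -
    obtain \<nu> \<kappa> where "\<mu> = \<nu> + \<kappa>" "\<kappa> \<in> Poly_Mapping.keys a"
      using keys_mult[of r a] \<mu> by blast
    then show ?thesis using a unfolding var_ideal_def by (auto simp: keys_add_monom)
  qed
  then show "r * a \<in> var_ideal V C"
    using a r unfolding var_ideal_def by (auto intro: poly_ring_mult)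
qed

text \<open>If neither factor lies in the ideal, the parts of a and b supported on monomials avoiding C
  are nonzero, and their product, again supported on such monomials, would lie in it.\<close>
lemma is_prime_ideal_var_ideal: "is_prime_ideal V (var_ideal V C :: 'k::field mpoly set)"
  unfolding is_prime_ideal_def
proof (intro conjI ballI impI)
  show I: "is_ideal V (var_ideal V C :: 'k mpoly set)" by (rule is_ideal_var_ideal)
  have "(1::'k mpoly) \<notin> var_ideal V C" unfolding var_ideal_def by auto
  then show "var_ideal V C \<noteq> (poly_ring V :: 'k mpoly set)" using poly_ring_one by blast
  fix a b :: "'k mpoly"
  assume a: "a \<in> poly_ring V" and b: "b \<in> poly_ring V" and ab: "a * b \<in> var_ideal V C"
  define Q where "Q \<mu> \<longleftrightarrow> Poly_Mapping.keys \<mu> \<inter> C = {}" for \<mu> :: "nat \<Rightarrow>\<^sub>0 nat"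
  show "a \<in> var_ideal V C \<or> b \<in> var_ideal V C"
  proof (rule ccontr)
    assume "\<not> (a \<in> var_ideal V C \<or> b \<in> var_ideal V C)"
    then obtain \<alpha> \<beta> where \<alpha>: "\<alpha> \<in> Poly_Mapping.keys a" "Q \<alpha>" and \<beta>: "\<beta> \<in> Poly_Mapping.keys b" "Q \<beta>"
      using a b unfolding var_ideal_def Q_def by auto
    define a1 where "a1 = restrict_monoms Q a"
    define a2 where "a2 = restrict_monoms (\<lambda>\<mu>. \<not> Q \<mu>) a"
    define b1 where "b1 = restrict_monoms Q b"
    define b2 where "b2 = restrict_monoms (\<lambda>\<mu>. \<not> Q \<mu>) b"
    have a12: "a = a1 + a2" and b12: "b = b1 + b2"
      unfolding a1_def a2_def b1_def b2_def by (rule restrict_monoms_split)+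
    have a2: "a2 \<in> var_ideal V C" and b2: "b2 \<in> var_ideal V C" and a1: "a1 \<in> poly_ring V"
      using a b unfolding a1_def a2_def b1_def b2_def var_ideal_def poly_ring_def Q_def
      by (auto simp: keys_restrict_monoms)
    have "a1 * b2 + a2 * b \<in> var_ideal V C"
      using I a2 b2 a1 b unfolding is_ideal_def by (metis mult.commute)
    moreover have "-1 \<in> (poly_ring V :: 'k mpoly set)" unfolding poly_ring_def by auto
    ultimately have "a * b + (-1) * (a1 * b2 + a2 * b) \<in> var_ideal V C"
      using I ab unfolding is_ideal_def by blast
    moreover have "a * b + (-1) * (a1 * b2 + a2 * b) = a1 * b1"
      unfolding a12 b12 by (simp add: algebra_simps)
    ultimately have a1b1: "a1 * b1 \<in> var_ideal V C" by simp
    have "a1 \<noteq> 0" "b1 \<noteq> 0"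
      using \<alpha> \<beta> unfolding a1_def a2_def b1_def b2_def by (auto simp: keys_restrict_monoms simp flip: keys_eq_empty)
    then obtain \<mu> where \<mu>: "\<mu> \<in> Poly_Mapping.keys (a1 * b1)"
      by (metis mult_eq_0_iff keys_eq_empty ex_in_conv)
    then obtain \<nu> \<kappa> where "\<mu> = \<nu> + \<kappa>" "\<nu> \<in> Poly_Mapping.keys a1" "\<kappa> \<in> Poly_Mapping.keys b1"
      using keys_mult[of a1 b1] by blast
    then have "Q \<mu>" unfolding a1_def a2_def b1_def b2_def by (auto simp: keys_restrict_monoms Q_def keys_add_monom)
    then show False using a1b1 \<mu> unfolding var_ideal_def Q_def by auto
  qed
qed

section \<open>The v-number of a graph\<close>

definition simple_graph :: "nat set \<Rightarrow> nat set set \<Rightarrow> bool" where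
  "simple_graph V E \<longleftrightarrow> finite V \<and> (\<forall>e\<in>E. \<exists>u w. e = {u, w} \<and> u \<noteq> w \<and> u \<in> V \<and> w \<in> V)"

definition nbhd :: "nat set set \<Rightarrow> nat set \<Rightarrow> nat set" where
  "nbhd E A = {u. \<exists>a\<in>A. {u, a} \<in> E}"

definition independent :: "nat set set \<Rightarrow> nat set \<Rightarrow> bool" where
  "independent E A \<longleftrightarrow> (\<forall>e\<in>E. \<not> e \<subseteq> A)"

definition vertex_cover :: "nat set set \<Rightarrow> nat set \<Rightarrow> bool" where
  "vertex_cover E C \<longleftrightarrow> (\<forall>e\<in>E. e \<inter> C \<noteq> {})"

lemma simple_graph_edges: "simple_graph V E \<Longrightarrow> \<forall>e\<in>E. finite e \<and> e \<subseteq> V"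
  unfolding simple_graph_def by fastforce

lemma nbhdI: "a \<in> A \<Longrightarrow> {u, a} \<in> E \<Longrightarrow> u \<in> nbhd E A"
  unfolding nbhd_def by blast

lemma nbhd_subset: "simple_graph V E \<Longrightarrow> nbhd E A \<subseteq> V"
  unfolding simple_graph_def nbhd_def by (fastforce simp: doubleton_eq_iff)

lemma vertex_cover_edge: "vertex_cover E C \<Longrightarrow> {x, y} \<in> E \<Longrightarrow> x \<in> C \<or> y \<in> C"
  unfolding vertex_cover_def by fastforce

lemma edge_subset_Un_iff:
  assumes G: "simple_graph V E" and A: "independent E A" "vertex_cover E (nbhd E A)"
  shows "(\<exists>e\<in>E. e \<subseteq> A \<union> K) \<longleftrightarrow> K \<inter> nbhd E A \<noteq> {}"
proof
  assume "\<exists>e\<in>E. e \<subseteq> A \<union> K"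
  then obtain e where e: "e \<in> E" "e \<subseteq> A \<union> K" by blast
  then obtain u w where uw: "e = {u, w}" using G unfolding simple_graph_def by blast
  have "\<not> e \<subseteq> A" using A(1) e(1) unfolding independent_def by blast
  show "K \<inter> nbhd E A \<noteq> {}"
  proof (cases "u \<in> A \<or> w \<in> A")
    case True
    then have "u \<in> A \<and> w \<in> K \<or> w \<in> A \<and> u \<in> K" using e(2) \<open>\<not> e \<subseteq> A\<close> uw by blast
    moreover have "{u, w} \<in> E" "{w, u} \<in> E" using e(1) uw by (simp_all add: insert_commute)
    ultimately show ?thesis by (blast intro: nbhdI)
  next
    case False
    then have "u \<in> K" "w \<in> K" using e(2) uw by auto
    then show ?thesis using vertex_cover_edge[OF A(2)] e(1) uw by blast
  qed
next
  assume "K \<inter> nbhd E A \<noteq> {}"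
  then obtain u a where "u \<in> K" "a \<in> A" "{u, a} \<in> E" unfolding nbhd_def by blast
  then show "\<exists>e\<in>E. e \<subseteq> A \<union> K" by (intro bexI[of _ "{u, a}"]) auto
qed

lemma colon_edge_ideal_monom_of_set:
  assumes G: "simple_graph V E" and "A \<subseteq> V" and A: "independent E A" "vertex_cover E (nbhd E A)"
  shows "colon V (edge_ideal V E) (Poly_Mapping.single (monom_of_set A) 1 :: 'k::field mpoly)
           = var_ideal V (nbhd E A)"
proof (rule set_eqI)
  fix p :: "'k mpoly"
  have fin: "finite A" using G \<open>A \<subseteq> V\<close> unfolding simple_graph_def by (auto intro: finite_subset)
  have xA: "Poly_Mapping.single (monom_of_set A) 1 \<in> (poly_ring V :: 'k mpoly set)"
    using fin \<open>A \<subseteq> V\<close> by (rule single_monom_of_set_in_poly_ring)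
  show "p \<in> colon V (edge_ideal V E) (Poly_Mapping.single (monom_of_set A) 1) \<longleftrightarrow> p \<in> var_ideal V (nbhd E A)"
  proof (cases "p \<in> poly_ring V")
    case False then show ?thesis unfolding colon_def var_ideal_def by auto
  next
    case True
    have "Poly_Mapping.keys (p * Poly_Mapping.single (monom_of_set A) 1)
            = (\<lambda>\<mu>. monom_of_set A + \<mu>) ` Poly_Mapping.keys p"
      by (subst mult.commute) (rule keys_single_mult, simp)
    then have "p \<in> colon V (edge_ideal V E) (Poly_Mapping.single (monom_of_set A) 1)
          \<longleftrightarrow> (\<forall>\<mu>\<in>Poly_Mapping.keys p. contains_edge E (monom_of_set A + \<mu>))"
      unfolding colon_def using True xA
      by (simp add: mem_edge_ideal_iff[OF simple_graph_edges[OF G]] poly_ring_mult)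
    also have "\<dots> \<longleftrightarrow> (\<forall>\<mu>\<in>Poly_Mapping.keys p. Poly_Mapping.keys \<mu> \<inter> nbhd E A \<noteq> {})"
      unfolding contains_edge_def using edge_subset_Un_iff[OF G A] fin
      by (simp add: keys_add_monom keys_monom_of_set)
    also have "\<dots> \<longleftrightarrow> p \<in> var_ideal V (nbhd E A)" unfolding var_ideal_def using True by simp
    finally show ?thesis .
  qed
qed

lemma not_in_edge_ideal_if_colon_prime:
  assumes "is_prime_ideal V (colon V (edge_ideal V E) f)"
  shows "f \<notin> edge_ideal V E"
proof
  assume "f \<in> edge_ideal V E"
  then have "1 \<in> colon V (edge_ideal V E) f" unfolding colon_def by (simp add: poly_ring_one)
  then have "r \<in> colon V (edge_ideal V E) f" if "r \<in> poly_ring V" for r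
    using assms that unfolding is_prime_ideal_def is_ideal_def by (metis mult.right_neutral)
  then have "colon V (edge_ideal V E) f = poly_ring V" unfolding colon_def by blast
  then show False using assms unfolding is_prime_ideal_def by blast
qed

lemma edge_poly_in_colon:
  assumes G: "simple_graph V E" and "e \<in> E" and f: "f \<in> poly_ring V"
  shows "edge_poly e \<in> colon V (edge_ideal V E) (f :: 'k::field mpoly)"
proof -
  have e: "finite e" "e \<subseteq> V" using G \<open>e \<in> E\<close> by (auto dest: simple_graph_edges)
  then have "edge_poly e \<in> (poly_ring V :: 'k mpoly set)" by (rule edge_poly_in_poly_ring)
  moreover have "\<forall>\<nu>\<in>Poly_Mapping.keys (edge_poly e * f). contains_edge E \<nu>"
    using e \<open>e \<in> E\<close>
    by (auto simp: edge_poly_eq_single keys_single_mult contains_edge_def keys_add_monom keys_monom_of_set)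
  ultimately show ?thesis
    unfolding colon_def using f by (simp add: mem_edge_ideal_iff[OF simple_graph_edges[OF G]] poly_ring_mult)
qed

lemma in_nbhd_if_var_in_colon:
  assumes G: "simple_graph V E" and \<mu>: "\<mu> \<in> Poly_Mapping.keys f" "\<not> contains_edge E \<mu>"
    and x: "var x * f \<in> edge_ideal V E"
  shows "x \<in> nbhd E (Poly_Mapping.keys \<mu>)"
proof -
  have "Poly_Mapping.single x 1 + \<mu> \<in> Poly_Mapping.keys (var x * f)"
    unfolding var_def using \<mu> by (simp add: keys_single_mult)
  then have "contains_edge E (Poly_Mapping.single x 1 + \<mu>)"
    using x by (auto simp: mem_edge_ideal_iff[OF simple_graph_edges[OF G]])
  then obtain e where e: "e \<in> E" "e \<subseteq> insert x (Poly_Mapping.keys \<mu>)"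
    unfolding contains_edge_def by (auto simp: keys_add_monom)
  then obtain u w where uw: "e = {u, w}" "u \<noteq> w" using G unfolding simple_graph_def by blast
  have "\<not> e \<subseteq> Poly_Mapping.keys \<mu>" using \<mu>(2) e(1) unfolding contains_edge_def by blast
  then consider "u = x" "w \<in> Poly_Mapping.keys \<mu>" | "w = x" "u \<in> Poly_Mapping.keys \<mu>"
    using e(2) uw by blast
  then show ?thesis
  proof cases
    case 1
    then show ?thesis using e(1) uw by (auto intro: nbhdI)
  next
    case 2
    then show ?thesis using e(1) uw by (auto intro: nbhdI simp: insert_commute)
  qed
qed

lemma independent_cover_of_prime_colon:
  assumes G: "simple_graph V E" and f: "f \<in> (homog V k :: 'k::field mpoly set)"
    and P: "is_prime_ideal V (colon V (edge_ideal V E) f)"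
  obtains B where "B \<subseteq> V" "independent E B" "vertex_cover E (nbhd E B)" "card B \<le> k"
proof -
  have fR: "f \<in> poly_ring V" using f unfolding homog_def by auto
  obtain \<mu> where \<mu>: "\<mu> \<in> Poly_Mapping.keys f" "\<not> contains_edge E \<mu>"
    using not_in_edge_ideal_if_colon_prime[OF P] fR
    by (auto simp: mem_edge_ideal_iff[OF simple_graph_edges[OF G]])
  define B where "B = Poly_Mapping.keys \<mu>"
  have "B \<subseteq> V" using fR \<mu> unfolding poly_ring_def B_def by auto
  moreover have "independent E B" using \<mu>(2) unfolding independent_def contains_edge_def B_def by blast
  moreover have "card B \<le> k"
    using card_keys_le_mon_deg[of \<mu>] f \<mu> unfolding homog_def B_def by auto
  moreover have "vertex_cover E (nbhd E B)" unfolding vertex_cover_def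
  proof
    fix e assume "e \<in> E"
    then obtain u w where uw: "e = {u, w}" "u \<noteq> w" "u \<in> V" "w \<in> V"
      using G unfolding simple_graph_def by blast
    have "var u * var w \<in> colon V (edge_ideal V E) f"
      using edge_poly_in_colon[OF G \<open>e \<in> E\<close> fR] uw unfolding edge_poly_def by simp
    then have "var u \<in> colon V (edge_ideal V E) f \<or> var w \<in> colon V (edge_ideal V E) f"
      using P uw var_in_poly_ring unfolding is_prime_ideal_def by blast
    then show "e \<inter> nbhd E B \<noteq> {}"
      using in_nbhd_if_var_in_colon[OF G \<mu>] uw unfolding colon_def B_def by blast
  qed
  ultimately show ?thesis using that by blast
qed

theorem v_graph_eq_card:
  assumes G: "simple_graph V E" and "A \<subseteq> V" and A: "independent E A" "vertex_cover E (nbhd E A)"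
    and min: "\<And>B. B \<subseteq> V \<Longrightarrow> independent E B \<Longrightarrow> vertex_cover E (nbhd E B) \<Longrightarrow> card A \<le> card B"
  shows "v_graph TYPE('k::field) V E = card A"
  unfolding v_graph_def v_number_def
proof (rule Least_equality)
  define f where "f = (Poly_Mapping.single (monom_of_set A) 1 :: 'k mpoly)"
  have fin: "finite A" using G \<open>A \<subseteq> V\<close> unfolding simple_graph_def by (auto intro: finite_subset)
  have fR: "f \<in> poly_ring V" unfolding f_def using fin \<open>A \<subseteq> V\<close> by (rule single_monom_of_set_in_poly_ring)
  then have "f \<in> homog V (card A)" unfolding homog_def f_def by (simp add: mon_deg_monom_of_set[OF fin])
  moreover have "colon V (edge_ideal V E) f = var_ideal V (nbhd E A)"
    unfolding f_def by (rule colon_edge_ideal_monom_of_set[OF G \<open>A \<subseteq> V\<close> A])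
  then have "colon V (edge_ideal V E) f \<in> Ass V (edge_ideal V E)"
    unfolding Ass_def using is_prime_ideal_var_ideal fR by auto
  ultimately show "\<exists>f\<in>homog V (card A). \<exists>P\<in>Ass V (edge_ideal V E :: 'k mpoly set). colon V (edge_ideal V E) f = P"
    by blast
next
  fix k assume "\<exists>f\<in>homog V k. \<exists>P\<in>Ass V (edge_ideal V E :: 'k mpoly set). colon V (edge_ideal V E) f = P"
  then obtain f where "f \<in> (homog V k :: 'k mpoly set)" "is_prime_ideal V (colon V (edge_ideal V E) f)"
    unfolding Ass_def by auto
  then obtain B where B: "B \<subseteq> V" "independent E B" "vertex_cover E (nbhd E B)" "card B \<le> k"
    by (rule independent_cover_of_prime_colon[OF G])
  have "card A \<le> card B" using B(1-3) by (rule min)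
  then show "card A \<le> k" using B(4) by linarith
qed

lemma card_le_twice_card_vertex_cover:
  assumes C: "finite C" "vertex_cover E C"
    and g: "inj_on g S" "\<And>x. x \<in> S \<Longrightarrow> {x, g x} \<in> E"
  shows "card S \<le> 2 * card C"
proof -
  define S1 where "S1 = S \<inter> C"
  define S2 where "S2 = {x \<in> S. g x \<in> C}"
  have S1: "S1 \<subseteq> C" and S2: "g ` S2 \<subseteq> C" "inj_on g S2"
    unfolding S1_def S2_def using g(1) by (auto intro: inj_on_subset)
  have fin: "finite S1" "finite S2"
    using finite_subset[OF S1 C(1)] finite_imageD[OF finite_subset[OF S2(1) C(1)] S2(2)] .
  have card: "card S1 \<le> card C" "card S2 \<le> card C"
    using card_mono[OF C(1) S1] card_mono[OF C(1) S2(1)] card_image[OF S2(2)] by simp_all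
  have "S \<subseteq> S1 \<union> S2" unfolding S1_def S2_def using vertex_cover_edge[OF C(2) g(2)] by blast
  then have "card S \<le> card (S1 \<union> S2)" using fin by (intro card_mono) auto
  also have "\<dots> \<le> card S1 + card S2" by (rule card_Un_le)
  finally show ?thesis using card by linarith
qed

lemma card_nbhd_le_sum_degrees:
  assumes "finite B"
  shows "card (nbhd E B) \<le> (\<Sum>b\<in>B. card (nbhd E {b}))"
proof -
  have "nbhd E B = (\<Union>b\<in>B. nbhd E {b})" unfolding nbhd_def by blast
  then show ?thesis using card_UN_le[OF assms, of "\<lambda>b. nbhd E {b}"] by (simp only:)
qed

lemma card_le_twice_sum_degrees:
  assumes G: "simple_graph V E" and "B \<subseteq> V" "vertex_cover E (nbhd E B)"
    and "inj_on g S" "\<And>x. x \<in> S \<Longrightarrow> {x, g x} \<in> E"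
  shows "card S \<le> 2 * (\<Sum>b\<in>B. card (nbhd E {b}))"
proof -
  have "finite V" using G unfolding simple_graph_def by simp
  then have "finite (nbhd E B)" "finite B"
    using finite_subset[OF nbhd_subset[OF G]] finite_subset[OF \<open>B \<subseteq> V\<close>] by blast+
  have "card S \<le> 2 * card (nbhd E B)"
    using \<open>finite (nbhd E B)\<close> assms(3-5) by (rule card_le_twice_card_vertex_cover)
  also have "\<dots> \<le> 2 * (\<Sum>b\<in>B. card (nbhd E {b}))"
    using card_nbhd_le_sum_degrees[OF \<open>finite B\<close>] by simp
  finally show ?thesis .
qed

lemma mod4_cases:
  fixes x :: nat
  obtains (r0) q where "x = 4 * q" | (r1) q where "x = 4 * q + 1"
    | (r2) q where "x = 4 * q + 2" | (r3) q where "x = 4 * q + 3"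
proof -
  have x: "x = 4 * (x div 4) + x mod 4" by simp
  have "x mod 4 = 0 \<or> x mod 4 = 1 \<or> x mod 4 = 2 \<or> x mod 4 = 3" by presburger
  then show thesis
  proof (elim disjE)
    assume "x mod 4 = 0" then show thesis using x by (intro r0[of "x div 4"]) linarith
  next
    assume "x mod 4 = 1" then show thesis using x by (intro r1[of "x div 4"]) linarith
  next
    assume "x mod 4 = 2" then show thesis using x by (intro r2[of "x div 4"]) linarith
  next
    assume "x mod 4 = 3" then show thesis using x by (intro r3[of "x div 4"]) linarith
  qed
qed

lemma card_progression: "card ((\<lambda>i. c + 4 * i) ` {..<t}) = (t :: nat)"
  by (subst card_image) (auto simp: inj_on_def)

lemma card_le_2_if_subset_doubleton:
  assumes "A \<subseteq> {p, q}"
  shows "card A \<le> 2"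
proof -
  have "card A \<le> card {p, q}" using assms by (intro card_mono) simp_all
  also have "\<dots> \<le> 2" by (simp add: card_insert_if)
  finally show ?thesis .
qed

section \<open>Cycles\<close>

lemma cycle_E_cases:
  assumes "e \<in> cycle_E n"
  obtains (step) x where "e = {x, x + 1}" "x + 1 < n"
    | (close) "e = {n - 1, 0}" "0 < n"
proof -
  obtain i where i: "i < n" "e = {i, (i + 1) mod n}" using assms unfolding cycle_E_def by blast
  show thesis
  proof (cases "i + 1 < n")
    case True
    then show thesis using i by (intro step[of i]) simp_all
  next
    case False
    then have "i + 1 = n" using i(1) by simp
    then have "e = {n - 1, 0}" using i(2) by (metis add_diff_cancel_right' mod_self)
    then show thesis using i(1) by (intro close) simp_all
  qed
qed

lemma cycle_adj_iff:
  "{x, y} \<in> cycle_E n \<longleftrightarrow>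
     x < n \<and> y < n \<and> (y = x + 1 \<or> x = y + 1 \<or> x + 1 = n \<and> y = 0 \<or> y + 1 = n \<and> x = 0)"
    (is "_ \<longleftrightarrow> ?adj x y")
proof
  assume "{x, y} \<in> cycle_E n"
  then show "?adj x y"
  proof (cases rule: cycle_E_cases)
    case (step i)
    then show ?thesis by (auto simp: doubleton_eq_iff)
  next
    case close
    then show ?thesis by (auto simp: doubleton_eq_iff)
  qed
next
  have edge: "{i, (i + 1) mod n} \<in> cycle_E n" if "i < n" for i
    using that unfolding cycle_E_def by blast
  have step: "{i, i + 1} \<in> cycle_E n" if "i + 1 < n" for i
    using edge[of i] that by simp
  have close: "{i, 0} \<in> cycle_E n" if "i + 1 = n" for i
    using edge[of i] that by simp
  assume "?adj x y"
  then consider "y = x + 1" "y < n" | "x = y + 1" "x < n" | "x + 1 = n" "y = 0" | "y + 1 = n" "x = 0"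
    by blast
  then show "{x, y} \<in> cycle_E n"
    by cases (use step[of x] step[of y] close[of x] close[of y] in \<open>simp_all add: insert_commute\<close>)
qed

lemma simple_graph_cycle:
  assumes "n \<ge> 3"
  shows "simple_graph (cycle_V n) (cycle_E n)"
  unfolding simple_graph_def
proof (intro conjI ballI)
  show "finite (cycle_V n)" unfolding cycle_V_def by simp
  fix e assume "e \<in> cycle_E n"
  moreover obtain x y where "e = {x, y}" using \<open>e \<in> cycle_E n\<close> unfolding cycle_E_def by blast
  ultimately have "x \<noteq> y \<and> x < n \<and> y < n" using assms by (auto simp: cycle_adj_iff)
  then show "\<exists>u w. e = {u, w} \<and> u \<noteq> w \<and> u \<in> cycle_V n \<and> w \<in> cycle_V n"
    using \<open>e = {x, y}\<close> unfolding cycle_V_def by auto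
qed

lemma nbhd_cycle_singleton:
  "nbhd (cycle_E n) {b} \<subseteq> {if b + 1 = n then 0 else b + 1, if b = 0 then n - 1 else b - 1}"
  unfolding nbhd_def by (auto simp: cycle_adj_iff)

lemma cycle_cover_lower_bound:
  assumes "n \<ge> 3" and B: "B \<subseteq> cycle_V n" "vertex_cover (cycle_E n) (nbhd (cycle_E n) B)"
  shows "n \<le> 4 * card B"
proof -
  define g where "g x = (if x + 1 = n then 0 else x + 1)" for x
  have "card {0..<n} \<le> 2 * (\<Sum>b\<in>B. card (nbhd (cycle_E n) {b}))"
  proof (rule card_le_twice_sum_degrees[OF simple_graph_cycle[OF assms(1)] B])
    show "inj_on g {0..<n}" unfolding g_def by (auto simp: inj_on_def split: if_splits)
    show "{x, g x} \<in> cycle_E n" if "x \<in> {0..<n}" for x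
      using that unfolding g_def cycle_adj_iff by auto
  qed
  also have "\<dots> \<le> 2 * (\<Sum>b\<in>B. 2)"
    using card_le_2_if_subset_doubleton[OF nbhd_cycle_singleton] by (intro mult_le_mono2 sum_mono)
  finally show ?thesis by simp
qed

definition cycle_witness :: "nat \<Rightarrow> nat set" where
  "cycle_witness t = insert 0 ((\<lambda>i. 2 + 4 * i) ` {..<t})"

lemma mem_cycle_witness: "x \<in> cycle_witness t \<longleftrightarrow> x = 0 \<or> (\<exists>i<t. x = 2 + 4 * i)"
  unfolding cycle_witness_def by auto

lemma card_cycle_witness: "card (cycle_witness t) = t + 1"
  unfolding cycle_witness_def using card_progression[of 2 t] by (subst card_insert_disjoint) auto

lemma independent_cycle_witness:
  assumes n: "n = 4 * t + 1 \<or> n = 4 * t + 2" and "t \<ge> 1"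
  shows "independent (cycle_E n) (cycle_witness t)"
  unfolding independent_def
proof (intro ballI notI)
  fix e assume "e \<in> cycle_E n" "e \<subseteq> cycle_witness t"
  then show False
  proof (cases rule: cycle_E_cases)
    case (step x)
    then have "x \<in> cycle_witness t" "x + 1 \<in> cycle_witness t" using \<open>e \<subseteq> _\<close> by auto
    then show False unfolding mem_cycle_witness by presburger
  next
    case close
    then have "n - 1 \<in> cycle_witness t" using \<open>e \<subseteq> _\<close> by auto
    moreover have "n - 1 = 4 * t \<or> n - 1 = 4 * t + 1" using n by auto
    ultimately show False using \<open>t \<ge> 1\<close> unfolding mem_cycle_witness by presburger
  qed
qed

lemma vertex_cover_nbhd_cycle_witness:
  assumes n: "n = 4 * t + 1 \<or> n = 4 * t + 2" and "t \<ge> 1"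
  shows "vertex_cover (cycle_E n) (nbhd (cycle_E n) (cycle_witness t))"
proof -
  let ?A = "cycle_witness t"
  have n': "4 * t + 1 \<le> n" "n \<le> 4 * t + 2" using n by auto
  have dominated: "x \<in> nbhd (cycle_E n) ?A" if x: "x < n" "odd x \<or> x + 1 = n" for x
  proof (cases "x + 1 = n")
    case True
    then have "0 \<in> ?A" "{x, 0} \<in> cycle_E n" using x(1) by (simp_all add: mem_cycle_witness cycle_adj_iff)
    then show ?thesis by (rule nbhdI)
  next
    case False
    then have "x + 1 < n" "odd x" using x by auto
    then consider q where "x = 4 * q + 1" | q where "x = 4 * q + 3"
      by (cases x rule: mod4_cases) simp_all
    then show ?thesis
    proof cases
      case (1 q)
      then have "q < t" using \<open>x + 1 < n\<close> n' by linarith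
      then have "x + 1 \<in> ?A" using 1 by (auto simp: mem_cycle_witness)
      moreover have "{x, x + 1} \<in> cycle_E n" using \<open>x + 1 < n\<close> by (simp add: cycle_adj_iff)
      ultimately show ?thesis by (rule nbhdI)
    next
      case (2 q)
      then have "q < t" using x(1) n' by linarith
      then have "x - 1 \<in> ?A" using 2 by (auto simp: mem_cycle_witness)
      moreover have "{x, x - 1} \<in> cycle_E n" using 2 x(1) by (simp add: cycle_adj_iff)
      ultimately show ?thesis by (rule nbhdI)
    qed
  qed
  show ?thesis unfolding vertex_cover_def
  proof (intro ballI)
    fix e assume "e \<in> cycle_E n"
    then show "e \<inter> nbhd (cycle_E n) ?A \<noteq> {}"
    proof (cases rule: cycle_E_cases)
      case (step x)
      then show ?thesis using dominated[of x] dominated[of "x + 1"] by auto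
    next
      case close
      then show ?thesis using dominated[of "n - 1"] n \<open>t \<ge> 1\<close> by auto
    qed
  qed
qed

lemma v_graph_cycle:
  assumes n: "n = 4 * t + 1 \<or> n = 4 * t + 2" and "t \<ge> 1"
  shows "v_graph TYPE('k::field) (cycle_V n) (cycle_E n) = t + 1"
proof -
  have "n \<ge> 3" using n \<open>t \<ge> 1\<close> by auto
  have "v_graph TYPE('k) (cycle_V n) (cycle_E n) = card (cycle_witness t)"
  proof (rule v_graph_eq_card)
    show "simple_graph (cycle_V n) (cycle_E n)" using \<open>n \<ge> 3\<close> by (rule simple_graph_cycle)
    show "cycle_witness t \<subseteq> cycle_V n" using n by (auto simp: cycle_V_def mem_cycle_witness)
    show "independent (cycle_E n) (cycle_witness t)" using assms by (rule independent_cycle_witness)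
    show "vertex_cover (cycle_E n) (nbhd (cycle_E n) (cycle_witness t))"
      using assms by (rule vertex_cover_nbhd_cycle_witness)
    show "card (cycle_witness t) \<le> card B"
      if "B \<subseteq> cycle_V n" "independent (cycle_E n) B" "vertex_cover (cycle_E n) (nbhd (cycle_E n) B)" for B
      using cycle_cover_lower_bound[OF \<open>n \<ge> 3\<close> that(1,3)] n card_cycle_witness[of t] by linarith
  qed
  then show ?thesis by (simp add: card_cycle_witness)
qed

section \<open>Paths\<close>

lemma path_adj_iff: "{x, y} \<in> path_E k \<longleftrightarrow> y = x + 1 \<and> y < k \<or> x = y + 1 \<and> x < k"
  unfolding path_E_def by (auto simp: doubleton_eq_iff)

lemma simple_graph_path: "simple_graph (path_V k) (path_E k)"
  unfolding simple_graph_def path_V_def path_E_def by fastforce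

lemma nbhd_path_singleton: "nbhd (path_E k) {b} \<subseteq> {b - 1, b + 1}"
  unfolding nbhd_def by (auto simp: path_adj_iff)

lemma path_cover_lower_bound:
  assumes "B \<subseteq> path_V k" "vertex_cover (path_E k) (nbhd (path_E k) B)"
  shows "k - 1 \<le> 4 * card B"
proof -
  have "card {0..<k - 1} \<le> 2 * (\<Sum>b\<in>B. card (nbhd (path_E k) {b}))"
    by (rule card_le_twice_sum_degrees[OF simple_graph_path assms, of Suc])
      (auto simp: path_adj_iff)
  also have "\<dots> \<le> 2 * (\<Sum>b\<in>B. 2)"
    using card_le_2_if_subset_doubleton[OF nbhd_path_singleton] by (intro mult_le_mono2 sum_mono)
  finally show ?thesis by simp
qed

definition path_witness :: "nat \<Rightarrow> nat set" where
  "path_witness s = (\<lambda>i. 1 + 4 * i) ` {..<s}"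

lemma mem_path_witness: "x \<in> path_witness s \<longleftrightarrow> (\<exists>i<s. x = 1 + 4 * i)"
  unfolding path_witness_def by auto

lemma card_path_witness: "card (path_witness s) = s"
  unfolding path_witness_def by (rule card_progression)

lemma independent_path_witness: "independent (path_E k) (path_witness s)"
  unfolding independent_def
proof (intro ballI notI)
  fix e assume "e \<in> path_E k" "e \<subseteq> path_witness s"
  then obtain x where "x \<in> path_witness s" "x + 1 \<in> path_witness s" unfolding path_E_def by blast
  then show False unfolding mem_path_witness by presburger
qed

lemma vertex_cover_nbhd_path_witness:
  assumes k: "k + 2 = 4 * s"
  shows "vertex_cover (path_E k) (nbhd (path_E k) (path_witness s))"
proof -
  let ?A = "path_witness s"
  have dominated: "x \<in> nbhd (path_E k) ?A" if x: "x < k" "even x" for x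
  proof -
    from x(2) consider q where "x = 4 * q" | q where "x = 4 * q + 2"
      by (cases x rule: mod4_cases) simp_all
    then show ?thesis
    proof cases
      case (1 q)
      then have "q < s" "x + 1 < k" using x(1) k by presburger+
      then have "x + 1 \<in> ?A" "{x, x + 1} \<in> path_E k" using 1 by (auto simp: mem_path_witness path_adj_iff)
      then show ?thesis by (rule nbhdI)
    next
      case (2 q)
      then have "q < s" using x(1) k by linarith
      then have "x - 1 \<in> ?A" "{x, x - 1} \<in> path_E k"
        using 2 x(1) by (auto simp: mem_path_witness path_adj_iff)
      then show ?thesis by (rule nbhdI)
    qed
  qed
  show ?thesis unfolding vertex_cover_def
  proof (intro ballI)
    fix e assume "e \<in> path_E k"
    then obtain x where "e = {x, x + 1}" "x + 1 < k" unfolding path_E_def by blast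
    then show "e \<inter> nbhd (path_E k) ?A \<noteq> {}" using dominated[of x] dominated[of "x + 1"] by auto
  qed
qed

lemma v_graph_path:
  assumes k: "k + 2 = 4 * s"
  shows "v_graph TYPE('k::field) (path_V k) (path_E k) = s"
proof -
  have "v_graph TYPE('k) (path_V k) (path_E k) = card (path_witness s)"
  proof (rule v_graph_eq_card[OF simple_graph_path])
    show "path_witness s \<subseteq> path_V k" using k by (auto simp: path_V_def mem_path_witness)
    show "independent (path_E k) (path_witness s)" by (rule independent_path_witness)
    show "vertex_cover (path_E k) (nbhd (path_E k) (path_witness s))"
      using k by (rule vertex_cover_nbhd_path_witness)
    show "card (path_witness s) \<le> card B"
      if "B \<subseteq> path_V k" "independent (path_E k) B" "vertex_cover (path_E k) (nbhd (path_E k) B)" for B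
      using path_cover_lower_bound[OF that(1,3)] k card_path_witness[of s] by linarith
  qed
  then show ?thesis by (simp add: card_path_witness)
qed

section \<open>A cycle with a pendant path\<close>

lemma H_adj_iff:
  "{x, y} \<in> H_E n m \<longleftrightarrow> {x, y} \<in> cycle_E n \<or> {x, y} = {0, n}
     \<or> n \<le> x \<and> y = x + 1 \<and> y + 1 < n + m \<or> n \<le> y \<and> x = y + 1 \<and> x + 1 < n + m"
proof -
  have "(\<exists>j. {x, y} = {n + j, n + j + 1} \<and> j + 2 < m)
      \<longleftrightarrow> n \<le> x \<and> y = x + 1 \<and> y + 1 < n + m \<or> n \<le> y \<and> x = y + 1 \<and> x + 1 < n + m"
  proof
    assume "\<exists>j. {x, y} = {n + j, n + j + 1} \<and> j + 2 < m"
    then show "n \<le> x \<and> y = x + 1 \<and> y + 1 < n + m \<or> n \<le> y \<and> x = y + 1 \<and> x + 1 < n + m"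
      by (auto simp: doubleton_eq_iff)
  next
    assume "n \<le> x \<and> y = x + 1 \<and> y + 1 < n + m \<or> n \<le> y \<and> x = y + 1 \<and> x + 1 < n + m"
    then show "\<exists>j. {x, y} = {n + j, n + j + 1} \<and> j + 2 < m"
    proof
      assume "n \<le> x \<and> y = x + 1 \<and> y + 1 < n + m"
      then show ?thesis by (intro exI[of _ "x - n"]) auto
    next
      assume "n \<le> y \<and> x = y + 1 \<and> x + 1 < n + m"
      then show ?thesis by (intro exI[of _ "y - n"]) (auto simp: insert_commute)
    qed
  qed
  moreover have "{x, y} \<in> H_E n m \<longleftrightarrow> {x, y} \<in> cycle_E n \<or> {x, y} = {0, n}
      \<or> (\<exists>j. {x, y} = {n + j, n + j + 1} \<and> j + 2 < m)"
    unfolding H_E_def by (simp only: Un_iff singleton_iff mem_Collect_eq disj_assoc)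
  ultimately show ?thesis by (simp only:)
qed

lemma H_E_cases:
  assumes "e \<in> H_E n m"
  obtains (step) x where "e = {x, x + 1}" "x + 1 < n \<or> n \<le> x \<and> x + 2 < n + m"
    | (close) "e = {n - 1, 0}"
    | (bridge) "e = {0, n}"
  using assms unfolding H_E_def
proof (elim UnE)
  assume "e \<in> cycle_E n"
  then show thesis by (cases rule: cycle_E_cases) (auto intro: step close)
next
  assume "e \<in> {{n + j, n + j + 1} |j. j + 2 < m}"
  then obtain j where "e = {n + j, n + j + 1}" "j + 2 < m" by blast
  then show thesis by (intro step[of "n + j"]) simp_all
qed (use bridge in blast)

lemma simple_graph_H:
  assumes "n \<ge> 3" "m \<ge> 2"
  shows "simple_graph (H_V n m) (H_E n m)"
  unfolding simple_graph_def
proof (intro conjI ballI)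
  show "finite (H_V n m)" unfolding H_V_def by simp
  fix e assume "e \<in> H_E n m"
  moreover obtain x y where "e = {x, y}"
    using \<open>e \<in> H_E n m\<close> unfolding H_E_def cycle_E_def by blast
  ultimately have "x \<noteq> y \<and> x < n + m - 1 \<and> y < n + m - 1"
    using assms by (auto simp: H_adj_iff cycle_adj_iff doubleton_eq_iff)
  then show "\<exists>u w. e = {u, w} \<and> u \<noteq> w \<and> u \<in> H_V n m \<and> w \<in> H_V n m"
    using \<open>e = {x, y}\<close> unfolding H_V_def by auto
qed

lemma card_nbhd_H_singleton:
  assumes "n \<ge> 3"
  shows "card (nbhd (H_E n m) {b}) \<le> (if b = 0 then 3 else 2)"
proof -
  consider "b = 0" | "0 < b" "b < n" | "b = n" | "n < b" by linarith
  then show ?thesis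
  proof cases
    case 1
    have "nbhd (H_E n m) {b} \<subseteq> {1, n - 1, n}"
      using 1 assms unfolding nbhd_def by (auto simp: H_adj_iff cycle_adj_iff doubleton_eq_iff)
    then have "card (nbhd (H_E n m) {b}) \<le> card {1, n - 1, n}" by (intro card_mono) simp_all
    also have "\<dots> \<le> 3" by (simp add: card_insert_if)
    finally show ?thesis using 1 by simp
  next
    case 2
    then have "nbhd (H_E n m) {b} \<subseteq> {if b + 1 = n then 0 else b + 1, b - 1}"
      unfolding nbhd_def by (auto simp: H_adj_iff cycle_adj_iff doubleton_eq_iff)
    then show ?thesis using 2 by (simp add: card_le_2_if_subset_doubleton)
  next
    case 3
    then have "nbhd (H_E n m) {b} \<subseteq> {0, n + 1}"
      using assms unfolding nbhd_def by (auto simp: H_adj_iff cycle_adj_iff doubleton_eq_iff)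
    then show ?thesis using 3 assms by (simp add: card_le_2_if_subset_doubleton)
  next
    case 4
    then have "nbhd (H_E n m) {b} \<subseteq> {b - 1, b + 1}"
      unfolding nbhd_def by (auto simp: H_adj_iff cycle_adj_iff doubleton_eq_iff)
    then show ?thesis using 4 by (simp add: card_le_2_if_subset_doubleton)
  qed
qed

lemma H_cover_lower_bound:
  assumes "n \<ge> 3" "m \<ge> 2" and B: "B \<subseteq> H_V n m" "vertex_cover (H_E n m) (nbhd (H_E n m) B)"
  shows "n + m - 2 \<le> 4 * card B + 2"
proof -
  define g where "g x = (if x + 1 = n then 0 else x + 1)" for x
  have "finite B" using B(1) unfolding H_V_def by (simp add: finite_subset)
  have "card {0..<n + m - 2} \<le> 2 * (\<Sum>b\<in>B. card (nbhd (H_E n m) {b}))"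
  proof (rule card_le_twice_sum_degrees[OF simple_graph_H[OF assms(1,2)] B])
    show "inj_on g {0..<n + m - 2}" unfolding g_def by (auto simp: inj_on_def split: if_splits)
    show "{x, g x} \<in> H_E n m" if "x \<in> {0..<n + m - 2}" for x
      using that unfolding g_def H_adj_iff cycle_adj_iff by auto
  qed
  also have "\<dots> \<le> 2 * (\<Sum>b\<in>B. if b = 0 then 3 else 2)"
    using card_nbhd_H_singleton[OF assms(1)] by (intro mult_le_mono2 sum_mono)
  also have "\<dots> \<le> 2 * (2 * card B + 1)"
  proof -
    have "(\<Sum>b\<in>X. if b = 0 then 3 else 2 :: nat) = 2 * card X + (if 0 \<in> X then 1 else 0)"
      if "finite X" for X :: "nat set"
      using that by (induction X rule: finite_induct) auto
    then show ?thesis using \<open>finite B\<close> by simp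
  qed
  finally show ?thesis by simp
qed

definition H_witness :: "nat \<Rightarrow> nat \<Rightarrow> nat \<Rightarrow> nat set" where
  "H_witness n t s = (\<lambda>i. 3 + 4 * i) ` {..<t} \<union> (\<lambda>i. n + 4 * i) ` {..<s}"

lemma mem_H_witness: "x \<in> H_witness n t s \<longleftrightarrow> (\<exists>i<t. x = 3 + 4 * i) \<or> (\<exists>i<s. x = n + 4 * i)"
  unfolding H_witness_def by auto

lemma card_H_witness:
  assumes "4 * t \<le> n"
  shows "card (H_witness n t s) = t + s"
  unfolding H_witness_def using card_progression[of 3 t] card_progression[of n s] assms
  by (subst card_Un_disjoint) auto

lemma independent_H_witness:
  assumes n': "4 * t + 1 \<le> n"
  shows "independent (H_E n m) (H_witness n t s)"
  unfolding independent_def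
proof (intro ballI notI)
  let ?A = "H_witness n t s"
  fix e assume "e \<in> H_E n m" "e \<subseteq> ?A"
  have "0 \<notin> ?A" using n' by (auto simp: mem_H_witness)
  from \<open>e \<in> H_E n m\<close> show False
  proof (cases rule: H_E_cases)
    case (step x)
    then have x: "x \<in> ?A" "x + 1 \<in> ?A" using \<open>e \<subseteq> ?A\<close> by auto
    have below_n: "y < n" if "\<exists>i<t. y = 3 + 4 * i" for y using that n' by auto
    show False
    proof (cases "x + 1 < n")
      case True
      then have "(\<exists>i<t. x = 3 + 4 * i) \<and> (\<exists>i<t. x + 1 = 3 + 4 * i)" using x by (auto simp: mem_H_witness)
      then show False by presburger
    next
      case False
      then have "n \<le> x" using step(2) by auto
      then have "(\<exists>i<s. x = n + 4 * i) \<and> (\<exists>i<s. x + 1 = n + 4 * i)"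
        using x below_n[of x] below_n[of "x + 1"] by (auto simp: mem_H_witness)
      then show False by presburger
    qed
  qed (use \<open>e \<subseteq> ?A\<close> \<open>0 \<notin> ?A\<close> in auto)
qed

lemma vertex_cover_nbhd_H_witness:
  assumes n: "n = 4 * t + 1 \<or> n = 4 * t + 2" and m: "m = 4 * s" "s \<ge> 1"
  shows "vertex_cover (H_E n m) (nbhd (H_E n m) (H_witness n t s))"
proof -
  let ?A = "H_witness n t s"
  have n': "4 * t + 1 \<le> n" "n \<le> 4 * t + 2" using n by auto
  have on_cycle: "x \<in> nbhd (H_E n m) ?A" if x: "x = 0 \<or> even x \<and> 2 \<le> x \<and> x < n" for x
  proof (cases "x = 0")
    case True
    have "n \<in> ?A" using m(2) by (auto simp: mem_H_witness)
    moreover have "{x, n} \<in> H_E n m" using True by (simp add: H_adj_iff)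
    ultimately show ?thesis by (rule nbhdI)
  next
    case False
    then have "even x" "2 \<le> x" "x < n" using x by auto
    then consider q where "x = 4 * q" "q \<ge> 1" | q where "x = 4 * q + 2"
      by (cases x rule: mod4_cases) simp_all
    then show ?thesis
    proof cases
      case (1 q)
      then have "q - 1 < t" "x - 1 = 3 + 4 * (q - 1)" using \<open>x < n\<close> n' by linarith+
      then have "x - 1 \<in> ?A" unfolding mem_H_witness by blast
      moreover have "{x, x - 1} \<in> H_E n m" using 1 \<open>x < n\<close> by (auto simp: H_adj_iff cycle_adj_iff)
      ultimately show ?thesis by (rule nbhdI)
    next
      case (2 q)
      then have "q < t" using \<open>x < n\<close> n' by linarith
      then have "x + 1 \<in> ?A" "{x, x + 1} \<in> H_E n m"
        using 2 n' by (auto simp: mem_H_witness H_adj_iff cycle_adj_iff)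
      then show ?thesis by (rule nbhdI)
    qed
  qed
  have on_path: "n + j \<in> nbhd (H_E n m) ?A" if j: "odd j" "j + 1 < m" for j
  proof -
    from j(1) consider q where "j = 4 * q + 1" | q where "j = 4 * q + 3"
      by (cases j rule: mod4_cases) simp_all
    then show ?thesis
    proof cases
      case (1 q)
      then have "q < s" using j(2) m by linarith
      then have "n + 4 * q \<in> ?A" unfolding mem_H_witness by blast
      moreover have "{n + j, n + 4 * q} \<in> H_E n m" using 1 j(2) by (auto simp: H_adj_iff)
      ultimately show ?thesis by (rule nbhdI)
    next
      case (2 q)
      then have "q + 1 < s" using j(2) m by linarith
      then have "n + 4 * (q + 1) \<in> ?A" unfolding mem_H_witness by blast
      moreover have "{n + j, n + 4 * (q + 1)} \<in> H_E n m" using 2 \<open>q + 1 < s\<close> m by (auto simp: H_adj_iff)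
      ultimately show ?thesis by (rule nbhdI)
    qed
  qed
  have "0 \<in> nbhd (H_E n m) ?A" by (rule on_cycle) simp
  show ?thesis unfolding vertex_cover_def
  proof (intro ballI)
    fix e assume "e \<in> H_E n m"
    then show "e \<inter> nbhd (H_E n m) ?A \<noteq> {}"
    proof (cases rule: H_E_cases)
      case (step x)
      have "x \<in> nbhd (H_E n m) ?A \<or> x + 1 \<in> nbhd (H_E n m) ?A"
      proof (cases "x < n")
        case True
        then have "x = 0 \<or> even x \<and> 2 \<le> x \<and> x < n \<or> even (x + 1) \<and> 2 \<le> x + 1 \<and> x + 1 < n"
          using step(2) by presburger
        then show ?thesis using on_cycle[of x] on_cycle[of "x + 1"] by blast
      next
        case False
        then obtain j where j: "x = n + j" by (metis le_add_diff_inverse not_less)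
        then have "odd j \<and> j + 1 < m \<or> odd (j + 1) \<and> j + 1 + 1 < m" using step(2) False by presburger
        then show ?thesis using on_path[of j] on_path[of "j + 1"] j by auto
      qed
      then show ?thesis using step(1) by blast
    qed (use \<open>0 \<in> nbhd (H_E n m) ?A\<close> in auto)
  qed
qed

lemma v_graph_H:
  assumes n: "n = 4 * t + 1 \<or> n = 4 * t + 2" "t \<ge> 1" and m: "m = 4 * s" "s \<ge> 1"
  shows "v_graph TYPE('k::field) (H_V n m) (H_E n m) = t + s"
proof -
  have "n \<ge> 3" "m \<ge> 2" and n': "4 * t + 1 \<le> n" "n \<le> 4 * t + 2" using n m by auto
  have "v_graph TYPE('k) (H_V n m) (H_E n m) = card (H_witness n t s)"
  proof (rule v_graph_eq_card)
    show "simple_graph (H_V n m) (H_E n m)" using \<open>n \<ge> 3\<close> \<open>m \<ge> 2\<close> by (rule simple_graph_H)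
    show "H_witness n t s \<subseteq> H_V n m" using n' m by (auto simp: H_V_def mem_H_witness)
    show "independent (H_E n m) (H_witness n t s)" using n'(1) by (rule independent_H_witness)
    show "vertex_cover (H_E n m) (nbhd (H_E n m) (H_witness n t s))"
      using n(1) m by (rule vertex_cover_nbhd_H_witness)
    show "card (H_witness n t s) \<le> card B"
      if "B \<subseteq> H_V n m" "independent (H_E n m) B" "vertex_cover (H_E n m) (nbhd (H_E n m) B)" for B
      using H_cover_lower_bound[OF \<open>n \<ge> 3\<close> \<open>m \<ge> 2\<close> that(1,3)] n' m card_H_witness[of t n s] by linarith
  qed
  then show ?thesis using n' by (simp add: card_H_witness)
qed

theorem corollary3p8:
  fixes n m :: nat
  assumes "n \<ge> 3" and "m \<ge> 3"
    and "n mod 4 = 1 \<or> n mod 4 = 2" and "m mod 4 = 0"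
  shows "v_graph TYPE('k::field) (H_V n m) (H_E n m)
         = v_graph TYPE('k) (cycle_V n) (cycle_E n) + v_graph TYPE('k) (path_V (m - 2)) (path_E (m - 2)) - 1"
proof -
  define t where "t = n div 4"
  define s where "s = m div 4"
  have "n = 4 * t + n mod 4" "m = 4 * s + m mod 4"
    unfolding t_def s_def using div_mult_mod_eq[of n 4] div_mult_mod_eq[of m 4] by linarith+
  then have n: "n = 4 * t + 1 \<or> n = 4 * t + 2" "t \<ge> 1" and m: "m = 4 * s" "s \<ge> 1"
    using assms by auto
  have "v_graph TYPE('k) (path_V (m - 2)) (path_E (m - 2)) = s"
    using m by (intro v_graph_path) auto
  then show ?thesis using v_graph_H[where 'k = 'k, OF n m] v_graph_cycle[where 'k = 'k, OF n] by simp
qed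

end
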